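(* Assume [Existence] and [Argmax] (see context). Then the MLE of $\theta$ exists: there is at least one $\hat\theta_n\in\mathcal{K}$ with $K^{\hat\delta_n,\hat\theta_n}_n(\omega^*_{\Lambda_n})=\min_{\theta\in\mathcal{K}}K^{\hat\delta_n,\theta}_n(\omega^*_{\Lambda_n})$.
   Context: Setting: $I=[\delta_{\min},\delta_{\max}]$, $0\le\delta_{\min}\le\delta_{\max}\le\infty$; $\emptyset\ne\Theta\subset\mathbb{R}^p$; $\mathcal{K}\subset\Theta$ compact. Configurations are locally finite subsets of $\mathbb{R}^d$; $\omega_\Lambda=\omega\cap\Lambda$; $\pi_\Lambda$ is the unit-intensity Poisson process on bounded $\Lambda$; $\Lambda_n=[-n,n]^d$; $\Omega_T=\{\omega:\exists t>0\ \forall n\ge1,\sum_{i\in\{-n,\dots,n-1\}^d}N_{i+[0,1]^d}(\omega)^2\le t(2n)^d\}$; $\Omega^\delta_\infty=\{\omega:\inf_{x\ne y\in\omega}|x-y|\ge\delta\}$. For each $\theta$, $(H^\theta_\Lambda)_\Lambda$ are finite-valued measurable energies on $\Omega_T$ with $H^\theta_{\Lambda'}(\omega)=H^\theta_\Lambda(\omega)+\varphi_{\Lambda,\Lambda'}(\omega_{\Lambda^c})$ for $\Lambda\subset\Lambda'$. Conditional densities $f^{\delta,\theta}_\Lambda=e^{-H^\theta_\Lambda}\mathbb{1}_{\Omega^\delta_\infty}/Z^{\delta,\theta}_\Lambda(\omega_{\Lambda^c})$ with $Z^{\delta,\theta}_\Lambda(\omega_{\Lambda^c})=\int e^{-H^\theta_\Lambda(\omega'_\Lambda\cup\omega_{\Lambda^c})}\mathbb{1}_{\Omega^\delta_\infty}(\omega'_\Lambda\cup\omega_{\Lambda^c})\pi_\Lambda(d\omega'_\Lambda)$;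 $\mathcal{G}^{\delta,\theta}$ = stationary finite-intensity Gibbs measures (probabilities $P$ with $P(\Omega^\delta_\infty\cap\Omega_T)=1$ satisfying the DLR equations with these densities). $\omega^*$ is a realization of some $P\in\mathcal{G}^{\delta^*,\theta^*}$. [Existence]: for all $\delta\in I,\theta\in\Theta$, bounded $\Lambda$, $\omega\in\Omega^\delta_\infty\cap\Omega_T$: $Z^{\delta,\theta}_\Lambda(\omega_{\Lambda^c})<\infty$ and $\mathcal{G}^{\delta,\theta}\ne\emptyset$. [Argmax]: for all $\omega\in\Omega_T$, $n\ge1$, $\theta\mapsto H^\theta_{\Lambda_n}(\omega_{\Lambda_n})$ is lower semicontinuous on $\mathcal{K}$ and there is an upper semicontinuous version $\tilde H^\theta_{\Lambda_n}$ with $\tilde H^\theta_{\Lambda_n}=H^\theta_{\Lambda_n}$ $\pi_{\Lambda_n}$-a.s. for each $\theta\in\mathcal{K}$. Free-boundary partition function $Z^{\delta,\theta}_{\Lambda}=\int e^{-H^\theta_\Lambda(\omega_\Lambda)}\mathbb{1}_{\Omega^\delta_\infty}(\omega_\Lambda)\pi_\Lambda(d\omega_\Lambda)$. Contrast: $K^{\delta,\theta}_n(\omega_{\Lambda_n})=|\Lambda_n|^{-1}\ln Z^{\delta,\theta}_{\Lambda_n}+|\Lambda_n|^{-1}H^\theta_{\Lambda_n}(\omega_{\Lambda_n})+\infty\cdot\mathbb{1}_{\tilde\delta_n(\omega_{\Lambda_n})<\delta}$ where $\tilde\delta_n(\omega_{\Lambda_n})$ is the minimal distance between two distinct points of $\omega_{\Lambda_n}$.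 $\hat\delta_n=\tilde\delta_n(\omega^*_{\Lambda_n})$ if this lies in $I$, and $\hat\delta_n=\delta_{\max}$ otherwise. *)

theory Defs
  imports "HOL-Analysis.Analysis"
begin

definition lsc_on :: "'b::topological_space set \<Rightarrow> ('b \<Rightarrow> real) \<Rightarrow> bool" where
  "lsc_on S f \<longleftrightarrow> (\<forall>x\<in>S. \<forall>y. y < f x \<longrightarrow> (\<forall>\<^sub>F z in at x within S. y < f z))"

definition usc_on :: "'b::topological_space set \<Rightarrow> ('b \<Rightarrow> real) \<Rightarrow> bool" where
  "usc_on S f \<longleftrightarrow> (\<forall>x\<in>S. \<forall>y. f x < y \<longrightarrow> (\<forall>\<^sub>F z in at x within S. f z < y))"

definition locally_finite_conf :: "'a::euclidean_space set \<Rightarrow> bool" where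
  "locally_finite_conf \<omega> \<longleftrightarrow> (\<forall>B. bounded B \<longrightarrow> finite (\<omega> \<inter> B))"

definition Conf :: "'a::euclidean_space set set" where
  "Conf = {\<omega>. locally_finite_conf \<omega>}"

definition Ncount :: "'a set \<Rightarrow> 'a set \<Rightarrow> nat" where
  "Ncount B \<omega> = card (\<omega> \<inter> B)"

definition conf_space :: "'a::euclidean_space set measure" where
  "conf_space = sigma Conf
     {{\<omega>\<in>Conf. Ncount B \<omega> = k} | B k. B \<in> sets borel \<and> bounded B}"

definition bounded_borel :: "'a::euclidean_space set \<Rightarrow> bool" where
  "bounded_borel \<Lambda> \<longleftrightarrow> \<Lambda> \<in> sets borel \<and> bounded \<Lambda>"

text \<open>Unit-intensity Poisson point process on a bounded Borel set \<Lambda>: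
  pi_\<Lambda>(A) = e^{-|\<Lambda>|} \<Sum>_k (1/k!) \<integral>_{\<Lambda>^k} 1_A({x_1,...,x_k}) dx.\<close>
definition pois :: "'a::euclidean_space set \<Rightarrow> 'a set measure" where
  "pois \<Lambda> = measure_of (space conf_space) (sets conf_space)
     (\<lambda>A. ennreal (exp (- measure lborel \<Lambda>)) *
        (\<Sum>k. emeasure (PiM {..<k} (\<lambda>_. restrict_space lborel \<Lambda>))
                 ((\<lambda>x. x ` {..<k}) -` A \<inter> space (PiM {..<k} (\<lambda>_. restrict_space lborel \<Lambda>)))
               / ennreal (fact k)))"

definition Lam :: "nat \<Rightarrow> 'a::euclidean_space set" where
  "Lam n = cbox (- (real n *\<^sub>R One)) (real n *\<^sub>R One)"

definition lattice_idx :: "nat \<Rightarrow> 'a::euclidean_space set" where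
  "lattice_idx n = {i. \<forall>b\<in>Basis. i \<bullet> b \<in> \<int> \<and> - real n \<le> i \<bullet> b \<and> i \<bullet> b \<le> real n - 1}"

definition OmegaT :: "'a::euclidean_space set set" where
  "OmegaT = {\<omega>\<in>Conf. \<exists>t>0. \<forall>n\<ge>1.
      (\<Sum>i\<in>lattice_idx n. real (Ncount (cbox i (i + One)) \<omega>) ^ 2)
        \<le> t * (2 * real n) ^ DIM('a)}"

definition OmegaHC :: "ereal \<Rightarrow> 'a::euclidean_space set set" where
  "OmegaHC \<delta> = {\<omega>. \<forall>x\<in>\<omega>. \<forall>y\<in>\<omega>. x \<noteq> y \<longrightarrow> \<delta> \<le> ereal (dist x y)}"

text \<open>H \<theta> \<Lambda> \<omega> stands for H^\<theta>_\<Lambda>(\<omega>).\<close>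
definition energy_family ::
  "'b set \<Rightarrow> ('b \<Rightarrow> 'a::euclidean_space set \<Rightarrow> 'a set \<Rightarrow> real) \<Rightarrow> bool" where
  "energy_family \<Theta> H \<longleftrightarrow> (\<forall>\<theta>\<in>\<Theta>.
     (\<forall>\<Lambda>. bounded_borel \<Lambda> \<longrightarrow> H \<theta> \<Lambda> \<in> borel_measurable (restrict_space conf_space OmegaT)) \<and>
     (\<forall>\<Lambda> \<Lambda>'. bounded_borel \<Lambda> \<longrightarrow> bounded_borel \<Lambda>' \<longrightarrow> \<Lambda> \<subseteq> \<Lambda>' \<longrightarrow>
        (\<exists>\<phi>. \<forall>\<omega>\<in>OmegaT. H \<theta> \<Lambda>' \<omega> = H \<theta> \<Lambda> \<omega> + \<phi> (\<omega> - \<Lambda>))))"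

definition Zcond :: "('b \<Rightarrow> 'a::euclidean_space set \<Rightarrow> 'a set \<Rightarrow> real) \<Rightarrow> ereal \<Rightarrow> 'b
     \<Rightarrow> 'a set \<Rightarrow> 'a set \<Rightarrow> ennreal" where
  "Zcond H \<delta> \<theta> \<Lambda> \<omega> = (\<integral>\<^sup>+ \<omega>'. ennreal (exp (- H \<theta> \<Lambda> ((\<omega>' \<inter> \<Lambda>) \<union> (\<omega> - \<Lambda>))))
        * indicator (OmegaHC \<delta>) ((\<omega>' \<inter> \<Lambda>) \<union> (\<omega> - \<Lambda>)) \<partial>pois \<Lambda>)"

definition cond_density :: "('b \<Rightarrow> 'a::euclidean_space set \<Rightarrow> 'a set \<Rightarrow> real) \<Rightarrow> ereal \<Rightarrow> 'b
     \<Rightarrow> 'a set \<Rightarrow> 'a set \<Rightarrow> ennreal" where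
  "cond_density H \<delta> \<theta> \<Lambda> \<omega> =
     ennreal (exp (- H \<theta> \<Lambda> \<omega>)) * indicator (OmegaHC \<delta>) \<omega> / Zcond H \<delta> \<theta> \<Lambda> \<omega>"

text \<open>Stationary, finite-intensity Gibbs measures (DLR equations).\<close>
definition gibbs :: "('b \<Rightarrow> 'a::euclidean_space set \<Rightarrow> 'a set \<Rightarrow> real) \<Rightarrow> ereal \<Rightarrow> 'b
     \<Rightarrow> 'a set measure set" where
  "gibbs H \<delta> \<theta> = {P. sets P = sets conf_space \<and> emeasure P (space P) = 1 \<and>
     (AE \<omega> in P. \<omega> \<in> OmegaHC \<delta> \<inter> OmegaT) \<and>
     (\<forall>u. distr P conf_space (\<lambda>\<omega>. (+) u ` \<omega>) = P) \<and>
     (\<integral>\<^sup>+ \<omega>. of_nat (Ncount (cbox 0 One) \<omega>) \<partial>P) < \<infinity> \<and>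
     (\<forall>\<Lambda>. bounded_borel \<Lambda> \<longrightarrow>
        (\<forall>F \<in> borel_measurable conf_space.
           (\<integral>\<^sup>+ \<omega>. F \<omega> \<partial>P) =
           (\<integral>\<^sup>+ \<omega>. (\<integral>\<^sup>+ \<omega>'. F ((\<omega>' \<inter> \<Lambda>) \<union> (\<omega> - \<Lambda>))
                 * cond_density H \<delta> \<theta> \<Lambda> ((\<omega>' \<inter> \<Lambda>) \<union> (\<omega> - \<Lambda>)) \<partial>pois \<Lambda>) \<partial>P)))}"

definition Zfree :: "('b \<Rightarrow> 'a::euclidean_space set \<Rightarrow> 'a set \<Rightarrow> real) \<Rightarrow> ereal \<Rightarrow> 'b
     \<Rightarrow> 'a set \<Rightarrow> ennreal" where
  "Zfree H \<delta> \<theta> \<Lambda> = (\<integral>\<^sup>+ \<omega>. ennreal (exp (- H \<theta> \<Lambda> (\<omega> \<inter> \<Lambda>)))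
        * indicator (OmegaHC \<delta>) (\<omega> \<inter> \<Lambda>) \<partial>pois \<Lambda>)"

text \<open>Minimal distance between two distinct points (+\<infinity> if fewer than two points).\<close>
definition min_dist :: "'a::euclidean_space set \<Rightarrow> ereal" where
  "min_dist \<omega> = Inf {ereal (dist x y) | x y. x \<in> \<omega> \<and> y \<in> \<omega> \<and> x \<noteq> y}"

text \<open>K^{\<delta>,\<theta>}_n(\<omega>_{\<Lambda>_n}); the term \<infinity>\<cdot>1 uses the convention \<infinity>\<cdot>0 = 0.\<close>
definition contrast :: "('b \<Rightarrow> 'a::euclidean_space set \<Rightarrow> 'a set \<Rightarrow> real) \<Rightarrow> ereal \<Rightarrow> 'b
     \<Rightarrow> nat \<Rightarrow> 'a set \<Rightarrow> ereal" where
  "contrast H \<delta> \<theta> n \<omega> =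
     (if min_dist (\<omega> \<inter> Lam n) < \<delta> then \<infinity>
      else ereal (ln (enn2real (Zfree H \<delta> \<theta> (Lam n))) / measure lborel (Lam n :: 'a set)
                  + H \<theta> (Lam n) (\<omega> \<inter> Lam n) / measure lborel (Lam n :: 'a set)))"

definition delta_hat :: "ereal \<Rightarrow> ereal \<Rightarrow> nat \<Rightarrow> 'a::euclidean_space set \<Rightarrow> ereal" where
  "delta_hat dmin dmax n \<omega> =
     (if min_dist (\<omega> \<inter> Lam n) \<in> {dmin..dmax} then min_dist (\<omega> \<inter> Lam n) else dmax)"

end

theory Submission
  imports Defs
begin

text \<open>If \<omega>* has two points closer than the estimated hardcore distance, the contrast is \<infinity> for
  every \<theta> and there is nothing to prove. Otherwise it equals (ln Z(\<theta>) + H(\<theta>, \<omega>*)) / |\<Lambda>_n|, and it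
  suffices that this is lower semicontinuous on the compact set K. The energy term is so by [Argmax].
  Since the Poisson process on \<Lambda>_n lives on finite configurations inside \<Lambda>_n, Z(\<theta>) is the integral of
  exp(-H(\<theta>)) over hardcore configurations in \<Omega>_T, where the upper semicontinuous version of H may be
  used; Fatou's lemma then makes Z lower semicontinuous. Z is finite by [Existence] with empty boundary
  condition, and, the integrand being positive, Z vanishes either on all of K or nowhere on K.\<close>

lemma lsc_on_cong:
  "(\<And>x. x \<in> K \<Longrightarrow> f x = g x) \<Longrightarrow> lsc_on K f \<longleftrightarrow> lsc_on K g"
  unfolding lsc_on_def eventually_at_filter
  by (intro ball_cong refl all_cong imp_cong eventually_cong) (auto simp: eventually_at_filter)

lemma lsc_on_add:
  assumes "lsc_on K f" "lsc_on K g"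
  shows "lsc_on K (\<lambda>x. f x + g x)"
  unfolding lsc_on_def
proof (intro ballI allI impI)
  fix x y assume x: "x \<in> K" and y: "y < f x + g x"
  define d where "d = (f x + g x - y) / 2"
  have "\<forall>\<^sub>F z in at x within K. f x - d < f z" "\<forall>\<^sub>F z in at x within K. g x - d < g z"
    using assms x y unfolding lsc_on_def d_def by auto
  then show "\<forall>\<^sub>F z in at x within K. y < f z + g z"
    by eventually_elim (simp add: d_def field_simps)
qed

lemma lsc_on_divide:
  assumes "lsc_on K f" "0 \<le> c"
  shows "lsc_on K (\<lambda>x. f x / c)"
proof (cases "c = 0")
  case False
  with assms(2) have "0 < c" by simp
  then show ?thesis
    using assms(1) unfolding lsc_on_def
    by (auto simp: pos_less_divide_eq)
qed (simp add: lsc_on_def)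

lemma lsc_on_attains_inf:
  fixes f :: "'b::topological_space \<Rightarrow> real"
  assumes "compact K" "K \<noteq> {}" "lsc_on K f"
  shows "\<exists>x\<in>K. \<forall>z\<in>K. f x \<le> f z"
  \<comment> \<open>Otherwise every x has a better point w x, and f exceeds f (w x) near x; among finitely many
     such neighbourhoods covering K, the best w x lies in one of them, a contradiction.\<close>
proof (rule ccontr)
  assume "\<not> ?thesis"
  then obtain w where w: "\<And>x. x \<in> K \<Longrightarrow> w x \<in> K \<and> f (w x) < f x"
    by (metis not_le)
  have "\<forall>x\<in>K. \<exists>U. open U \<and> x \<in> U \<and> (\<forall>z\<in>U \<inter> K. f (w x) < f z)"
  proof
    fix x assume "x \<in> K"
    have "\<forall>\<^sub>F z in at x within K. f (w x) < f z"
      using assms(3) w \<open>x \<in> K\<close> unfolding lsc_on_def by blast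
    then obtain U where "open U" "x \<in> U" "\<And>z. z \<in> U \<Longrightarrow> z \<noteq> x \<Longrightarrow> z \<in> K \<Longrightarrow> f (w x) < f z"
      unfolding eventually_at_topological by blast
    then show "\<exists>U. open U \<and> x \<in> U \<and> (\<forall>z\<in>U \<inter> K. f (w x) < f z)"
      using w \<open>x \<in> K\<close> by (metis IntD1 IntD2)
  qed
  then obtain U where U: "\<forall>x\<in>K. open (U x) \<and> x \<in> U x \<and> (\<forall>z\<in>U x \<inter> K. f (w x) < f z)"
    by (rule bchoice[THEN exE])
  then have "\<And>x. x \<in> K \<Longrightarrow> open (U x)" "K \<subseteq> (\<Union>x\<in>K. U x)"
    by blast+
  then obtain T where T: "T \<subseteq> K" "finite T" "K \<subseteq> (\<Union>x\<in>T. U x)"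
    by (rule compactE_image[OF assms(1)])
  with assms(2) have "T \<noteq> {}"
    by blast
  then obtain x0 where x0: "x0 \<in> T" "\<And>x. x \<in> T \<Longrightarrow> f (w x0) \<le> f (w x)"
    using ex_is_arg_min_if_finite[OF T(2), of "\<lambda>x. f (w x)"] unfolding is_arg_min_linorder by blast
  then obtain x1 where "x1 \<in> T" "w x0 \<in> U x1"
    using T w by blast
  then have "f (w x1) < f (w x0)"
    using U T w x0 by blast
  with x0 \<open>x1 \<in> T\<close> show False
    by (meson not_le)
qed

lemma lsc_on_sequentially:
  fixes f :: "'b::first_countable_topology \<Rightarrow> real"
  assumes "\<And>t x y. (\<And>k. t k \<in> K) \<Longrightarrow> x \<in> K \<Longrightarrow> t \<longlonglongrightarrow> x \<Longrightarrow> y < f x \<Longrightarrow>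
      \<forall>\<^sub>F k in sequentially. y < f (t k)"
  shows "lsc_on K f"
  unfolding lsc_on_def
  by (intro ballI allI impI sequentially_imp_eventually_within) (use assms in blast)

lemma usc_on_eventually_less_sequentially:
  assumes "usc_on K f" "\<And>k. t k \<in> K" "x \<in> K" "t \<longlonglongrightarrow> x" "f x < y"
  shows "\<forall>\<^sub>F k in sequentially. f (t k) < y"
proof -
  have "\<forall>\<^sub>F z in nhds x. z \<in> K \<longrightarrow> f z < y"
    using assms(1,3,5) unfolding usc_on_def eventually_at_filter
    by (auto elim!: eventually_mono)
  then have "\<forall>\<^sub>F k in sequentially. t k \<in> K \<longrightarrow> f (t k) < y"
    using assms(4) by (rule eventually_compose_filterlim)
  then show ?thesis
    using assms(2) by (simp add: eventually_mono)
qed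

lemma usc_on_exp_neg_le_liminf:
  assumes "usc_on K e" "\<And>k. t k \<in> K" "x \<in> K" "t \<longlonglongrightarrow> x"
  shows "ennreal (exp (- e x)) \<le> liminf (\<lambda>k. ennreal (exp (- e (t k))))"
  unfolding le_Liminf_iff
proof (intro allI impI)
  fix z assume z: "z < ennreal (exp (- e x))"
  then obtain r where r: "z = ennreal r" "0 \<le> r" "r < exp (- e x)"
    by (cases z rule: ennreal_cases) (auto simp: ennreal_less_iff)
  show "\<forall>\<^sub>F k in sequentially. z < ennreal (exp (- e (t k)))"
  proof (cases "r = 0")
    case False
    with r have "ln r < ln (exp (- e x))"
      by (subst ln_less_cancel_iff) auto
    then have "e x < - ln r"
      by simp
    with usc_on_eventually_less_sequentially[OF assms]
    have "\<forall>\<^sub>F k in sequentially. e (t k) < - ln r" .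
    then show ?thesis
    proof (rule eventually_mono)
      fix k assume "e (t k) < - ln r"
      then have "exp (ln r) < exp (- e (t k))"
        by simp
      then have "r < exp (- e (t k))"
        using r False by simp
      then show "z < ennreal (exp (- e (t k)))"
        using r by (simp add: ennreal_less_iff)
    qed
  qed (simp add: r)
qed

text \<open>In the next lemmas A need not be measurable (the set of hardcore configurations is not known
  to be); the supremum over simple functions that defines the integral still yields a measurable
  part of A carrying the integral.\<close>

lemma less_nn_integral_indicatorE:
  fixes g :: "'x \<Rightarrow> ennreal"
  assumes "y < (\<integral>\<^sup>+x. g x * indicator A x \<partial>M)"
  obtains B where "B \<in> sets M" "B \<subseteq> A" "y < (\<integral>\<^sup>+x. g x * indicator B x \<partial>M)"
proof -
  from assms obtain s where s: "simple_function M s" "s \<le> (\<lambda>x. g x * indicator A x)"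
    and y: "y < integral\<^sup>S M s"
    unfolding nn_integral_def less_SUP_iff by blast
  define B where "B = {x\<in>space M. s x \<noteq> 0}"
  have "B \<in> sets M"
    using borel_measurable_simple_function[OF s(1)] unfolding B_def by measurable
  moreover have "B \<subseteq> A"
  proof
    fix x assume "x \<in> B"
    moreover have "s x \<le> g x * indicator A x"
      using s(2) by (simp add: le_fun_def)
    ultimately show "x \<in> A"
      unfolding B_def by (cases "x \<in> A") auto
  qed
  moreover have "y < (\<integral>\<^sup>+x. g x * indicator B x \<partial>M)"
  proof -
    have "integral\<^sup>S M s = (\<integral>\<^sup>+x. s x \<partial>M)"
      by (rule nn_integral_eq_simple_integral[OF s(1), symmetric])
    also have "\<dots> \<le> (\<integral>\<^sup>+x. g x * indicator B x \<partial>M)"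
    proof (rule nn_integral_mono)
      fix x assume "x \<in> space M"
      moreover have "s x \<le> g x * indicator A x"
        using s(2) by (simp add: le_fun_def)
      ultimately show "s x \<le> g x * indicator B x"
        using \<open>B \<subseteq> A\<close> unfolding B_def by (cases "s x = 0") (auto simp: indicator_def)
    qed
    finally show ?thesis
      using y by (rule order.strict_trans2[rotated])
  qed
  ultimately show ?thesis
    by (rule that)
qed

lemma nn_integral_indicator_eq_0_transfer:
  fixes f g :: "'x \<Rightarrow> ennreal"
  assumes f: "f \<in> borel_measurable M" "\<And>x. 0 < f x"
    and f0: "(\<integral>\<^sup>+x. f x * indicator A x \<partial>M) = 0"
  shows "(\<integral>\<^sup>+x. g x * indicator A x \<partial>M) = 0"
proof (rule ccontr)
  assume "(\<integral>\<^sup>+x. g x * indicator A x \<partial>M) \<noteq> 0"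
  then have "0 < (\<integral>\<^sup>+x. g x * indicator A x \<partial>M)"
    by (simp add: zero_less_iff_neq_zero)
  then obtain B where B: "B \<in> sets M" "B \<subseteq> A" "0 < (\<integral>\<^sup>+x. g x * indicator B x \<partial>M)"
    by (rule less_nn_integral_indicatorE)
  have "(\<integral>\<^sup>+x. f x * indicator B x \<partial>M) \<le> (\<integral>\<^sup>+x. f x * indicator A x \<partial>M)"
    using B(2) by (intro nn_integral_mono) (auto simp: indicator_def)
  with f0 have "(\<integral>\<^sup>+x. f x * indicator B x \<partial>M) = 0"
    by simp
  then have "AE x in M. f x * indicator B x = 0"
    by (subst nn_integral_0_iff_AE[symmetric])
      (intro borel_measurable_times_ennreal f(1) borel_measurable_indicator B(1))
  then have "AE x in M. x \<notin> B"
  proof (rule eventually_mono)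
    fix x assume "f x * indicator B x = 0"
    with f(2)[of x] show "x \<notin> B"
      by (auto simp: indicator_def)
  qed
  then have "AE x in M. g x * indicator B x = 0"
    by (rule eventually_mono) simp
  from nn_integral_cong_AE[OF this] B(3) show False
    by simp
qed

lemma less_nn_integral_indicator_eventually:
  fixes g :: "'x \<Rightarrow> ennreal" and u :: "nat \<Rightarrow> 'x \<Rightarrow> ennreal"
  assumes u: "\<And>k. u k \<in> borel_measurable M"
    and liminf: "\<And>x. x \<in> A \<Longrightarrow> g x \<le> liminf (\<lambda>k. u k x)"
    and y: "y < (\<integral>\<^sup>+x. g x * indicator A x \<partial>M)"
  shows "\<forall>\<^sub>F k in sequentially. y < (\<integral>\<^sup>+x. u k x * indicator A x \<partial>M)"
proof -
  obtain B where B: "B \<in> sets M" "B \<subseteq> A" "y < (\<integral>\<^sup>+x. g x * indicator B x \<partial>M)"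
    using less_nn_integral_indicatorE[OF y] by blast
  note B(3)
  also have "\<dots> \<le> (\<integral>\<^sup>+x. liminf (\<lambda>k. u k x * indicator B x) \<partial>M)"
    using B(2) liminf by (intro nn_integral_mono) (auto simp: indicator_def)
  also have "\<dots> \<le> liminf (\<lambda>k. \<integral>\<^sup>+x. u k x * indicator B x \<partial>M)"
    by (intro nn_integral_liminf borel_measurable_times_ennreal u borel_measurable_indicator B(1))
  finally have "\<forall>\<^sub>F k in sequentially. y < (\<integral>\<^sup>+x. u k x * indicator B x \<partial>M)"
    by (rule less_LiminfD)
  then show ?thesis
  proof (rule eventually_mono)
    fix k assume "y < (\<integral>\<^sup>+x. u k x * indicator B x \<partial>M)"
    also have "\<dots> \<le> (\<integral>\<^sup>+x. u k x * indicator A x \<partial>M)"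
      using B(2) by (intro nn_integral_mono) (auto simp: indicator_def)
    finally show "y < (\<integral>\<^sup>+x. u k x * indicator A x \<partial>M)" .
  qed
qed

lemma lsc_on_ln_nn_integral_exp:
  fixes e :: "'b::first_countable_topology \<Rightarrow> 'x \<Rightarrow> real"
  assumes meas: "\<And>\<theta>. \<theta> \<in> K \<Longrightarrow> e \<theta> \<in> borel_measurable M"
    and usc: "\<And>x. x \<in> A \<Longrightarrow> usc_on K (\<lambda>\<theta>. e \<theta> x)"
    and fin: "\<And>\<theta>. \<theta> \<in> K \<Longrightarrow> (\<integral>\<^sup>+x. ennreal (exp (- e \<theta> x)) * indicator A x \<partial>M) < \<infinity>"
  shows "lsc_on K (\<lambda>\<theta>. ln (enn2real (\<integral>\<^sup>+x. ennreal (exp (- e \<theta> x)) * indicator A x \<partial>M)))"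
proof -
  define Z where "Z \<theta> = (\<integral>\<^sup>+x. ennreal (exp (- e \<theta> x)) * indicator A x \<partial>M)" for \<theta>
  have Z_finite: "ennreal (enn2real (Z \<theta>)) = Z \<theta>" if "\<theta> \<in> K" for \<theta>
    using fin[OF that] by (simp add: Z_def infinity_ennreal_def)
  have exp_measurable: "(\<lambda>x. ennreal (exp (- e \<theta> x))) \<in> borel_measurable M" if "\<theta> \<in> K" for \<theta>
    using meas[OF that] by measurable
  have "lsc_on K (\<lambda>\<theta>. ln (enn2real (Z \<theta>)))"
  proof (rule lsc_on_sequentially)
    fix t \<theta> y
    assume t: "\<And>k. t k \<in> K" "\<theta> \<in> K" "t \<longlonglongrightarrow> \<theta>" and y: "y < ln (enn2real (Z \<theta>))"
    show "\<forall>\<^sub>F k in sequentially. y < ln (enn2real (Z (t k)))"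
    proof (cases "Z \<theta> = 0")
      case True
      \<comment> \<open>ln (enn2real (Z \<theta>)) is then the junk value ln 0 = 0; it persists along the sequence.\<close>
      have "Z (t k) = 0" for k
        unfolding Z_def
        by (rule nn_integral_indicator_eq_0_transfer[OF exp_measurable[OF t(2)] _ True[unfolded Z_def]]) simp
      with True y show ?thesis
        by simp
    next
      case False
      with fin[OF t(2)] have "0 < enn2real (Z \<theta>)"
        by (simp add: Z_def enn2real_positive_iff zero_less_iff_neq_zero infinity_ennreal_def)
      moreover have "exp y < exp (ln (enn2real (Z \<theta>)))"
        using y by simp
      ultimately have "exp y < enn2real (Z \<theta>)"
        by simp
      then have "ennreal (exp y) < ennreal (enn2real (Z \<theta>))"
        by (simp add: ennreal_less_iff)
      then have "ennreal (exp y) < Z \<theta>"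
        by (simp only: Z_finite[OF t(2)])
      then have "\<forall>\<^sub>F k in sequentially. ennreal (exp y) < Z (t k)"
        unfolding Z_def
      proof (rule less_nn_integral_indicator_eventually[rotated 2])
        show "(\<lambda>x. ennreal (exp (- e (t k) x))) \<in> borel_measurable M" for k
          by (rule exp_measurable[OF t(1)])
        show "ennreal (exp (- e \<theta> x)) \<le> liminf (\<lambda>k. ennreal (exp (- e (t k) x)))" if "x \<in> A" for x
          by (rule usc_on_exp_neg_le_liminf[OF usc[OF that] t])
      qed
      then show ?thesis
      proof (rule eventually_mono)
        fix k assume "ennreal (exp y) < Z (t k)"
        then have "ennreal (exp y) < ennreal (enn2real (Z (t k)))"
          by (simp only: Z_finite[OF t(1)])
        then have lt: "exp y < enn2real (Z (t k))"
          by (simp add: ennreal_less_iff)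
        then have "0 < enn2real (Z (t k))"
          using exp_gt_zero[of y] by linarith
        with lt show "y < ln (enn2real (Z (t k)))"
          using ln_less_cancel_iff[of "exp y" "enn2real (Z (t k))"] by simp
      qed
    qed
  qed
  then show ?thesis
    unfolding Z_def .
qed

lemma space_conf_space [simp]: "space conf_space = Conf"
  unfolding conf_space_def by (simp add: space_measure_of_conv)

lemma sets_conf_space:
  "sets conf_space = sigma_sets Conf {{\<omega>\<in>Conf. Ncount B \<omega> = k} | B k. B \<in> sets borel \<and> bounded B}"
  unfolding conf_space_def by (rule sets_measure_of) auto

lemma sets_pois: "sets (pois \<Lambda>) = sets conf_space"
  unfolding pois_def by (rule sets.sets_measure_of_eq)

lemma space_pois [simp]: "space (pois \<Lambda>) = Conf"
  unfolding pois_def by (simp add: space_measure_of_conv)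

lemma Ncount_eq_in_sets_conf_space:
  "B \<in> sets borel \<Longrightarrow> bounded B \<Longrightarrow> {\<omega>\<in>Conf. Ncount B \<omega> = k} \<in> sets conf_space"
  unfolding sets_conf_space by (rule sigma_sets.Basic) blast

lemma emeasure_pois_eq_0:
  assumes "\<And>\<omega>. \<omega> \<in> N \<Longrightarrow> \<not> \<omega> \<subseteq> \<Lambda>"
  shows "emeasure (pois \<Lambda>) N = 0"
  \<comment> \<open>No measurability of N is needed: every sample x ` {..<k} of the defining series lies in \<Lambda>, and a
     non-measurable N gets measure 0 anyway.\<close>
proof -
  have "x ` {..<k} \<subseteq> \<Lambda>" if "x \<in> space (PiM {..<k} (\<lambda>_. restrict_space lborel \<Lambda>))" for x k
    using that by (auto simp: space_PiM space_restrict_space PiE_iff)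
  then have empty: "(\<lambda>x. x ` {..<k}) -` N \<inter> space (PiM {..<k} (\<lambda>_. restrict_space lborel \<Lambda>)) = {}" for k
    using assms by blast
  show ?thesis
    unfolding pois_def emeasure_measure_of_conv empty by simp
qed

lemma AE_pois_subset:
  fixes \<Lambda> :: "'a::euclidean_space set"
  assumes "closed \<Lambda>"
  shows "AE \<omega> in pois \<Lambda>. \<omega> \<subseteq> \<Lambda>"
proof -
  define S where "S m = cball (0::'a) (real m) - \<Lambda>" for m :: nat
  \<comment> \<open>The configurations with a point outside \<Lambda>, expressed by counting variables to make them measurable.\<close>
  define N where "N = (\<Union>m. Conf - {\<omega>\<in>Conf. Ncount (S m) \<omega> = 0})"
  have S_borel: "S m \<in> sets borel" for m
    unfolding S_def by (intro sets.Diff borel_closed assms closed_cball)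
  have S_bounded: "bounded (S m)" for m
    unfolding S_def by (rule bounded_subset[OF bounded_cball]) blast
  have "Conf \<in> sets conf_space"
    using sets.top[of conf_space] by simp
  then have "Conf - {\<omega>\<in>Conf. Ncount (S m) \<omega> = 0} \<in> sets conf_space" for m
    by (rule sets.Diff[OF _ Ncount_eq_in_sets_conf_space[OF S_borel S_bounded]])
  then have N_sets: "N \<in> sets (pois \<Lambda>)"
    unfolding N_def sets_pois by (intro sets.countable_UN) (simp add: image_subset_iff)
  have "{\<omega> \<in> space (pois \<Lambda>). \<not> \<omega> \<subseteq> \<Lambda>} \<subseteq> N"
  proof
    fix \<omega> assume "\<omega> \<in> {\<omega> \<in> space (pois \<Lambda>). \<not> \<omega> \<subseteq> \<Lambda>}"
    then have \<omega>: "\<omega> \<in> Conf" and "\<not> \<omega> \<subseteq> \<Lambda>"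
      by auto
    then obtain p where p: "p \<in> \<omega>" "p \<notin> \<Lambda>"
      by blast
    obtain m :: nat where "norm p \<le> real m"
      using real_arch_simple by blast
    with p have nonempty: "\<omega> \<inter> S m \<noteq> {}"
      unfolding S_def by auto
    have fin: "finite (\<omega> \<inter> S m)"
      using \<omega> S_bounded unfolding Conf_def locally_finite_conf_def by blast
    have "Ncount (S m) \<omega> \<noteq> 0"
      unfolding Ncount_def using card_0_eq[OF fin] nonempty by argo
    with \<omega> have "\<omega> \<in> Conf - {\<omega>\<in>Conf. Ncount (S m) \<omega> = 0}"
      by simp
    then show "\<omega> \<in> N"
      unfolding N_def by (rule UN_I[OF UNIV_I])
  qed
  moreover have "emeasure (pois \<Lambda>) N = 0"
  proof (rule emeasure_pois_eq_0)
    fix \<omega> assume "\<omega> \<in> N"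
    then obtain m where "Ncount (S m) \<omega> \<noteq> 0"
      unfolding N_def by blast
    then show "\<not> \<omega> \<subseteq> \<Lambda>"
      unfolding Ncount_def S_def by (metis Diff_iff card.empty disjoint_iff subsetD)
  qed
  ultimately show ?thesis
    using N_sets by (rule AE_I)
qed

lemma lattice_idx_subset_image_PiE:
  "lattice_idx n \<subseteq> (\<lambda>f. \<Sum>b\<in>Basis. real_of_int (f b) *\<^sub>R b) `
     (PiE Basis (\<lambda>_. {-int n..int n - 1}) :: ('a::euclidean_space \<Rightarrow> int) set)"
proof
  fix i :: 'a assume i: "i \<in> lattice_idx n"
  define f where "f = restrict (\<lambda>b. \<lfloor>i \<bullet> b\<rfloor>) Basis"
  have ib: "i \<bullet> b \<in> \<int>" "- real n \<le> i \<bullet> b" "i \<bullet> b \<le> real n - 1" if "b \<in> Basis" for b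
    using i that unfolding lattice_idx_def by blast+
  have floor: "real_of_int \<lfloor>i \<bullet> b\<rfloor> = i \<bullet> b" if "b \<in> Basis" for b
    using ib(1)[OF that] by (metis Ints_cases floor_of_int)
  have "\<lfloor>i \<bullet> b\<rfloor> \<in> {-int n..int n - 1}" if "b \<in> Basis" for b
  proof -
    have "real_of_int (- int n) \<le> real_of_int \<lfloor>i \<bullet> b\<rfloor>" "real_of_int \<lfloor>i \<bullet> b\<rfloor> \<le> real_of_int (int n - 1)"
      using ib[OF that] floor[OF that] by simp_all
    then show ?thesis
      by (simp only: of_int_le_iff atLeastAtMost_iff)
  qed
  then have "f \<in> PiE Basis (\<lambda>_. {-int n..int n - 1})"
    unfolding f_def by (simp add: restrict_PiE_iff)
  moreover have "i = (\<Sum>b\<in>Basis. real_of_int (f b) *\<^sub>R b)"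
    by (subst euclidean_representation[of i, symmetric]) (simp add: f_def floor)
  ultimately show "i \<in> (\<lambda>f. \<Sum>b\<in>Basis. real_of_int (f b) *\<^sub>R b) ` PiE Basis (\<lambda>_. {-int n..int n - 1})"
    by blast
qed

lemma card_lattice_idx_le:
  "real (card (lattice_idx n :: 'a::euclidean_space set)) \<le> (2 * real n) ^ DIM('a)"
proof -
  let ?P = "PiE Basis (\<lambda>_. {-int n..int n - 1}) :: ('a \<Rightarrow> int) set"
  have "card (lattice_idx n :: 'a set) \<le> card ((\<lambda>f. \<Sum>b\<in>Basis. real_of_int (f b) *\<^sub>R b) ` ?P :: 'a set)"
    by (intro card_mono finite_imageI lattice_idx_subset_image_PiE) (simp add: finite_PiE)
  also have "\<dots> \<le> card ?P"
    by (intro card_image_le) (simp add: finite_PiE)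
  also have "card ?P = (2 * n) ^ DIM('a)"
    by (simp add: card_PiE nat_mult_distrib power_mult_distrib)
  finally show ?thesis
    by (metis of_nat_le_iff of_nat_mult of_nat_numeral of_nat_power)
qed

lemma finite_imp_OmegaT:
  fixes \<omega> :: "'a::euclidean_space set"
  assumes "finite \<omega>"
  shows "\<omega> \<in> OmegaT"
proof -
  define c where "c = real (card \<omega>)"
  have "(\<Sum>i\<in>lattice_idx n. real (Ncount (cbox i (i + One)) \<omega>) ^ 2) \<le> (c\<^sup>2 + 1) * (2 * real n) ^ DIM('a)"
    for n
  proof -
    have "real (Ncount (cbox i (i + One)) \<omega>) ^ 2 \<le> c\<^sup>2" for i :: 'a
      unfolding c_def Ncount_def using assms by (simp add: card_mono power_mono)
    then have "(\<Sum>i\<in>lattice_idx n. real (Ncount (cbox i (i + One)) \<omega>) ^ 2)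
        \<le> real (card (lattice_idx n :: 'a set)) * c\<^sup>2"
      by (rule sum_bounded_above)
    also have "\<dots> \<le> (2 * real n) ^ DIM('a) * c\<^sup>2"
      by (intro mult_right_mono card_lattice_idx_le) simp
    also have "\<dots> \<le> (c\<^sup>2 + 1) * (2 * real n) ^ DIM('a)"
      by (simp add: algebra_simps)
    finally show ?thesis .
  qed
  moreover have "\<omega> \<in> Conf"
    using assms by (simp add: Conf_def locally_finite_conf_def)
  moreover have "0 < c\<^sup>2 + 1"
    by (simp add: add_nonneg_pos)
  ultimately show ?thesis
    unfolding OmegaT_def by blast
qed

lemma Zfree_eq_nn_integral_OmegaT:
  fixes \<Lambda> :: "'a::euclidean_space set"
  assumes "closed \<Lambda>" "bounded \<Lambda>" and H: "AE \<omega> in pois \<Lambda>. Ht \<omega> = H \<theta> \<Lambda> \<omega>"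
  shows "Zfree H \<delta> \<theta> \<Lambda> = (\<integral>\<^sup>+\<omega>. ennreal (exp (- Ht \<omega>)) * indicator (OmegaHC \<delta> \<inter> OmegaT) \<omega> \<partial>pois \<Lambda>)"
  unfolding Zfree_def
proof (rule nn_integral_cong_AE)
  show "AE \<omega> in pois \<Lambda>. ennreal (exp (- H \<theta> \<Lambda> (\<omega> \<inter> \<Lambda>))) * indicator (OmegaHC \<delta>) (\<omega> \<inter> \<Lambda>)
      = ennreal (exp (- Ht \<omega>)) * indicator (OmegaHC \<delta> \<inter> OmegaT) \<omega>"
    using AE_pois_subset[OF assms(1)] H AE_space
  proof eventually_elim
    fix \<omega> assume \<omega>: "\<omega> \<subseteq> \<Lambda>" "Ht \<omega> = H \<theta> \<Lambda> \<omega>" "\<omega> \<in> space (pois \<Lambda>)"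
    have "finite (\<omega> \<inter> \<Lambda>)"
      using \<omega>(3) assms(2) unfolding space_pois Conf_def locally_finite_conf_def by blast
    with \<omega>(1) have "finite \<omega>"
      by (simp add: Int_absorb2)
    with \<omega> show "ennreal (exp (- H \<theta> \<Lambda> (\<omega> \<inter> \<Lambda>))) * indicator (OmegaHC \<delta>) (\<omega> \<inter> \<Lambda>)
      = ennreal (exp (- Ht \<omega>)) * indicator (OmegaHC \<delta> \<inter> OmegaT) \<omega>"
      by (simp add: Int_absorb2 indicator_def finite_imp_OmegaT)
  qed
qed

lemma Zcond_empty_eq_Zfree: "Zcond H \<delta> \<theta> \<Lambda> {} = Zfree H \<delta> \<theta> \<Lambda>"
  by (simp add: Zcond_def Zfree_def)

lemma lsc_on_ln_Zfree:
  fixes \<Lambda> :: "'a::euclidean_space set" and K :: "'b::first_countable_topology set"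
  assumes \<Lambda>: "closed \<Lambda>" "bounded \<Lambda>"
    and usc: "\<And>\<omega>. \<omega> \<in> OmegaT \<Longrightarrow> usc_on K (\<lambda>\<theta>. Ht \<theta> \<omega>)"
    and Ht: "\<And>\<theta>. \<theta> \<in> K \<Longrightarrow> Ht \<theta> \<in> borel_measurable conf_space"
      "\<And>\<theta>. \<theta> \<in> K \<Longrightarrow> AE \<omega> in pois \<Lambda>. Ht \<theta> \<omega> = H \<theta> \<Lambda> \<omega>"
    and fin: "\<And>\<theta>. \<theta> \<in> K \<Longrightarrow> Zfree H \<delta> \<theta> \<Lambda> < \<infinity>"
  shows "lsc_on K (\<lambda>\<theta>. ln (enn2real (Zfree H \<delta> \<theta> \<Lambda>)))"
proof -
  have Zfree: "Zfree H \<delta> \<theta> \<Lambda>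
      = (\<integral>\<^sup>+\<omega>. ennreal (exp (- Ht \<theta> \<omega>)) * indicator (OmegaHC \<delta> \<inter> OmegaT) \<omega> \<partial>pois \<Lambda>)"
    if "\<theta> \<in> K" for \<theta>
    by (rule Zfree_eq_nn_integral_OmegaT[where Ht = "Ht \<theta>" and H = H and \<theta> = \<theta>, OF \<Lambda> Ht(2)[OF that]])
  have "lsc_on K (\<lambda>\<theta>. ln (enn2real
      (\<integral>\<^sup>+\<omega>. ennreal (exp (- Ht \<theta> \<omega>)) * indicator (OmegaHC \<delta> \<inter> OmegaT) \<omega> \<partial>pois \<Lambda>)))"
  proof (rule lsc_on_ln_nn_integral_exp)
    show "Ht \<theta> \<in> borel_measurable (pois \<Lambda>)" if "\<theta> \<in> K" for \<theta>
      using Ht(1)[OF that] by (simp add: measurable_cong_sets[OF sets_pois refl])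
    show "usc_on K (\<lambda>\<theta>. Ht \<theta> \<omega>)" if "\<omega> \<in> OmegaHC \<delta> \<inter> OmegaT" for \<omega>
      using that by (simp add: usc)
    show "(\<integral>\<^sup>+\<omega>. ennreal (exp (- Ht \<theta> \<omega>)) * indicator (OmegaHC \<delta> \<inter> OmegaT) \<omega> \<partial>pois \<Lambda>) < \<infinity>"
      if "\<theta> \<in> K" for \<theta>
      using fin[OF that] Zfree[OF that] by simp
  qed
  then show ?thesis
    by (rule lsc_on_cong[THEN iffD2, rotated]) (simp add: Zfree)
qed

lemma contrast_attains_INF:
  fixes H :: "'b::topological_space \<Rightarrow> 'a::euclidean_space set \<Rightarrow> 'a set \<Rightarrow> real"
  assumes K: "compact K" "K \<noteq> {}"
    and lsc_Z: "lsc_on K (\<lambda>\<theta>. ln (enn2real (Zfree H \<delta> \<theta> (Lam n))))"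
    and lsc_H: "lsc_on K (\<lambda>\<theta>. H \<theta> (Lam n) (\<omega> \<inter> Lam n))"
  shows "\<exists>\<theta>hat\<in>K. contrast H \<delta> \<theta>hat n \<omega> = (INF \<theta>\<in>K. contrast H \<delta> \<theta> n \<omega>)"
proof (cases "min_dist (\<omega> \<inter> Lam n) < \<delta>")
  case True
  then have "contrast H \<delta> \<theta> n \<omega> = \<infinity>" for \<theta>
    by (simp add: contrast_def)
  with K(2) show ?thesis
    by (simp add: ex_in_conv)
next
  case False
  define c where "c \<theta> = ln (enn2real (Zfree H \<delta> \<theta> (Lam n))) / measure lborel (Lam n :: 'a set)
      + H \<theta> (Lam n) (\<omega> \<inter> Lam n) / measure lborel (Lam n :: 'a set)" for \<theta>
  have contrast: "contrast H \<delta> \<theta> n \<omega> = ereal (c \<theta>)" for \<theta>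
    using False by (simp add: contrast_def c_def)
  have "lsc_on K c"
    unfolding c_def by (intro lsc_on_add lsc_on_divide lsc_Z lsc_H measure_nonneg)
  then obtain \<theta>hat where \<theta>hat: "\<theta>hat \<in> K" and min: "\<And>\<theta>. \<theta> \<in> K \<Longrightarrow> c \<theta>hat \<le> c \<theta>"
    using lsc_on_attains_inf[OF K] by blast
  have "ereal (c \<theta>hat) = (INF \<theta>\<in>K. ereal (c \<theta>))"
    by (rule antisym[OF INF_greatest INF_lower[OF \<theta>hat]]) (simp add: min)
  with \<theta>hat show ?thesis
    unfolding contrast by blast
qed

theorem lemma2:
  fixes H :: "'b::euclidean_space \<Rightarrow> 'a::euclidean_space set \<Rightarrow> 'a set \<Rightarrow> real"
    and \<Theta> K :: "'b set"
    and dmin dmax dstar :: ereal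
    and \<theta>star :: 'b
    and P :: "'a set measure"
    and \<omega>star :: "'a set"
  assumes I: "0 \<le> dmin" "dmin \<le> dmax"
    and Theta: "\<Theta> \<noteq> {}" "K \<subseteq> \<Theta>" "compact K" "K \<noteq> {}"
    and energy: "energy_family \<Theta> H"
    and Existence: "\<forall>\<delta>\<in>{dmin..dmax}. \<forall>\<theta>\<in>\<Theta>.
        (\<forall>\<Lambda> \<omega>. bounded_borel \<Lambda> \<longrightarrow> \<omega> \<in> OmegaHC \<delta> \<inter> OmegaT \<longrightarrow>
             Zcond H \<delta> \<theta> \<Lambda> \<omega> < \<infinity>) \<and> gibbs H \<delta> \<theta> \<noteq> {}"
    and Argmax: "\<forall>n::nat. n \<ge> 1 \<longrightarrow>
        (\<forall>\<omega>\<in>OmegaT. lsc_on K (\<lambda>\<theta>. H \<theta> (Lam n) (\<omega> \<inter> Lam n))) \<and>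
        (\<exists>Ht :: 'b \<Rightarrow> 'a set \<Rightarrow> real.
            (\<forall>\<omega>\<in>OmegaT. usc_on K (\<lambda>\<theta>. Ht \<theta> \<omega>)) \<and>
            (\<forall>\<theta>\<in>K. Ht \<theta> \<in> borel_measurable conf_space \<and>
                 (AE \<omega> in pois (Lam n). Ht \<theta> \<omega> = H \<theta> (Lam n) \<omega>)))"
    and truth: "dstar \<in> {dmin..dmax}" "\<theta>star \<in> \<Theta>" "P \<in> gibbs H dstar \<theta>star"
    and realization: "\<omega>star \<in> OmegaHC dstar \<inter> OmegaT"
  shows "\<forall>n::nat. n \<ge> 1 \<longrightarrow>
     (\<exists>\<theta>hat\<in>K. contrast H (delta_hat dmin dmax n \<omega>star) \<theta>hat n \<omega>star
                = (INF \<theta>\<in>K. contrast H (delta_hat dmin dmax n \<omega>star) \<theta> n \<omega>star))"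
proof (intro allI impI)
  fix n :: nat assume n: "1 \<le> n"
  define \<delta> where "\<delta> = delta_hat dmin dmax n \<omega>star"
  have \<delta>: "\<delta> \<in> {dmin..dmax}"
    using I(2) by (auto simp: \<delta>_def delta_hat_def)
  have \<Lambda>: "closed (Lam n :: 'a set)" "bounded (Lam n :: 'a set)" "bounded_borel (Lam n :: 'a set)"
    by (auto simp: Lam_def bounded_borel_def)
  obtain Ht where Ht_usc: "\<forall>\<omega>\<in>OmegaT. usc_on K (\<lambda>\<theta>. Ht \<theta> \<omega>)"
    and Ht: "\<forall>\<theta>\<in>K. Ht \<theta> \<in> borel_measurable conf_space \<and> (AE \<omega> in pois (Lam n). Ht \<theta> \<omega> = H \<theta> (Lam n) \<omega>)"
    using Argmax n by blast
  have Zfree_finite: "Zfree H \<delta> \<theta> (Lam n) < \<infinity>" if "\<theta> \<in> K" for \<theta>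
  proof -
    have "{} \<in> OmegaHC \<delta> \<inter> OmegaT"
      by (simp add: OmegaHC_def finite_imp_OmegaT)
    then have "Zcond H \<delta> \<theta> (Lam n) {} < \<infinity>"
      using Existence \<delta> Theta(2) that \<Lambda>(3) by blast
    then show ?thesis
      by (simp add: Zcond_empty_eq_Zfree)
  qed
  have "lsc_on K (\<lambda>\<theta>. ln (enn2real (Zfree H \<delta> \<theta> (Lam n))))"
    by (rule lsc_on_ln_Zfree[where Ht = Ht, OF \<Lambda>(1,2)])
      (use Ht_usc Ht Zfree_finite in \<open>auto simp: infinity_ennreal_def\<close>)
  moreover have "lsc_on K (\<lambda>\<theta>. H \<theta> (Lam n) (\<omega>star \<inter> Lam n))"
    using Argmax n realization by blast
  ultimately have "\<exists>\<theta>hat\<in>K. contrast H \<delta> \<theta>hat n \<omega>star = (INF \<theta>\<in>K. contrast H \<delta> \<theta> n \<omega>star)"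
    by (rule contrast_attains_INF[OF Theta(3,4)])
  then show "\<exists>\<theta>hat\<in>K. contrast H (delta_hat dmin dmax n \<omega>star) \<theta>hat n \<omega>star
      = (INF \<theta>\<in>K. contrast H (delta_hat dmin dmax n \<omega>star) \<theta> n \<omega>star)"
    unfolding \<delta>_def .
qed

end
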